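(* Let $T\ge2$, $n_t\ge T$, $\mathsf{snr}>0$, $\gamma=\mathsf{snr}/(1+\mathsf{snr})$. Let $\mathbf{X}$ be a random matrix in $\tilde{\mathcal{X}}_{\mathsf{snr}}$, and for $i=2,\dots,T$ let $\mathbf{r}_i\in\mathcal{B}_{i-1}$ denote the vector of the first $i-1$ entries of the $i$-th column of $\mathsf{snr}^{-1/2}\mathbf{X}$ (so that $\mathbf{X}$ is determined by $(\mathbf{r}_2,\dots,\mathbf{r}_T)$). If $(\mathbf{r}_2,\dots,\mathbf{r}_T)$ has density with respect to Lebesgue measure $$p\propto\prod_{i=2}^T(1-\|\mathbf{r}_i\|^2)^{\frac{T-i}{2}}\mathbb{1}(\mathbf{r}_i\in\mathcal{B}_{i-1}),$$ then $\mathbf{q}:=\boldsymbol{\rho}(\mathbf{X})$ is uniformly distributed on $\mathcal{Q}_\gamma$.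
   Context: $\mathcal{B}_n:=\{\mathbf{x}\in\mathbb{R}^n:\|\mathbf{x}\|\le1\}$. $\tilde{\mathcal{X}}_{\mathsf{snr}}$ is the set of $\mathbf{X}=[\mathbf{x}_1\cdots\mathbf{x}_T]\in\mathbb{R}^{n_t\times T}$ with $\|\mathbf{x}_j\|=\sqrt{\mathsf{snr}}$ for all $j$, $X_{ij}=0$ for $i>j$, and $X_{jj}\ge0$. $\boldsymbol{\rho}(\mathbf{X})\in\mathbb{R}^{\binom T2}$, indexed by unordered pairs of distinct elements of $\{1,\dots,T\}$, has entries $\rho_{\{i_1,i_2\}}(\mathbf{X})=\frac{\mathbf{x}_{i_1}^{\mathsf T}\mathbf{x}_{i_2}}{\sqrt{(1+\|\mathbf{x}_{i_1}\|^2)(1+\|\mathbf{x}_{i_2}\|^2)}}$. For $\mathbf{q}\in\mathbb{R}^{\binom T2}$, $\boldsymbol{\Sigma}(\mathbf{q})$ is the $T\times T$ symmetric matrix with unit diagonal and $(j,k)$ entry $q_{\{j,k\}}$, and $\mathcal{Q}_\gamma:=\{\mathbf{q}:\boldsymbol{\Sigma}(\mathbf{q})\succeq(1-\gamma)\mathbf{I}\}$. *)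

theory Defs
  imports "HOL-Probability.Probability"
begin

text \<open>Matrices are functions nat => nat => real, indexed 1-based: X i j is the entry in
  row i (1 <= i <= n_t) and column j (1 <= j <= T). Column j is x_j = (X 1 j, ..., X n_t j).\<close>

definition col_sqnorm :: "nat \<Rightarrow> (nat \<Rightarrow> nat \<Rightarrow> real) \<Rightarrow> nat \<Rightarrow> real" where
  "col_sqnorm nt X j = (\<Sum>l=1..nt. (X l j)^2)"

definition Xtilde :: "real \<Rightarrow> nat \<Rightarrow> nat \<Rightarrow> (nat \<Rightarrow> nat \<Rightarrow> real) set" where
  "Xtilde snr nt T = {X.
     (\<forall>j\<in>{1..T}. sqrt (col_sqnorm nt X j) = sqrt snr) \<and>
     (\<forall>i\<in>{1..nt}. \<forall>j\<in>{1..T}. i > j \<longrightarrow> X i j = 0) \<and>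
     (\<forall>j\<in>{1..T}. X j j \<ge> 0)}"

text \<open>Index set of the coordinates of (r_2,...,r_T): (i,k) means the k-th entry of r_i.\<close>
definition Ridx :: "nat \<Rightarrow> (nat \<times> nat) set" where
  "Ridx T = {(i,k). 2 \<le> i \<and> i \<le> T \<and> 1 \<le> k \<and> k < i}"

definition rvec :: "real \<Rightarrow> nat \<Rightarrow> (nat \<Rightarrow> nat \<Rightarrow> real) \<Rightarrow> (nat \<times> nat \<Rightarrow> real)" where
  "rvec snr T X = restrict (\<lambda>(i,k). X k i / sqrt snr) (Ridx T)"

definition rdens :: "nat \<Rightarrow> (nat \<times> nat \<Rightarrow> real) \<Rightarrow> real" where
  "rdens T r = (\<Prod>i=2..T.
      (let s = (\<Sum>k=1..i-1. (r (i,k))^2) in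
       sqrt ((1 - s) ^ (T - i)) * indicator {..1} (sqrt s)))"

text \<open>Unordered pairs {j,k} of distinct elements of {1..T}, represented as (j,k) with j<k.\<close>
definition Pidx :: "nat \<Rightarrow> (nat \<times> nat) set" where
  "Pidx T = {(j,k). 1 \<le> j \<and> j < k \<and> k \<le> T}"

definition rho_entry :: "nat \<Rightarrow> (nat \<Rightarrow> nat \<Rightarrow> real) \<Rightarrow> nat \<Rightarrow> nat \<Rightarrow> real" where
  "rho_entry nt X j k = (\<Sum>l=1..nt. X l j * X l k) /
      sqrt ((1 + (sqrt (col_sqnorm nt X j))^2) * (1 + (sqrt (col_sqnorm nt X k))^2))"

definition rho :: "nat \<Rightarrow> nat \<Rightarrow> (nat \<Rightarrow> nat \<Rightarrow> real) \<Rightarrow> (nat \<times> nat \<Rightarrow> real)" where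
  "rho nt T X = restrict (\<lambda>(j,k). rho_entry nt X j k) (Pidx T)"

definition Sigma_mat :: "(nat \<times> nat \<Rightarrow> real) \<Rightarrow> nat \<Rightarrow> nat \<Rightarrow> real" where
  "Sigma_mat q j k = (if j = k then 1 else if j < k then q (j,k) else q (k,j))"

definition Qset :: "nat \<Rightarrow> real \<Rightarrow> (nat \<times> nat \<Rightarrow> real) set" where
  "Qset T \<gamma> = {q \<in> Pidx T \<rightarrow>\<^sub>E UNIV.
     \<forall>v :: nat \<Rightarrow> real. (\<Sum>j=1..T. \<Sum>k=1..T. v j * Sigma_mat q j k * v k)
        \<ge> (1 - \<gamma>) * (\<Sum>j=1..T. (v j)^2)}"

end

theory Submission
  imports Defs
begin

text \<open>Write \<open>u\<^sub>j = (r\<^sub>j, sqrt (1 - \<parallel>r\<^sub>j\<parallel>\<^sup>2), 0, \<dots>)\<close>. Since the columns of \<open>X\<close> are \<open>sqrt snr \<cdot> u\<^sub>j\<close>,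
  \<open>\<rho>(X)\<close> is \<open>\<gamma>\<close> times the Gram matrix of the unit vectors \<open>u\<^sub>j\<close>, so \<open>\<Sigma>(\<rho>(X)) - (1 - \<gamma>) I\<close> is
  positive semidefinite. The map \<open>r \<mapsto> \<rho>\<close> is triangular: its \<open>(i, k)\<close> coordinate is affine in
  \<open>r\<^sub>i\<^sub>k\<close> with slope \<open>\<gamma> sqrt (1 - \<parallel>r\<^sub>k\<parallel>\<^sup>2)\<close> once the earlier coordinates are fixed, so its Jacobian
  is exactly the given density, up to a constant, and \<open>\<rho>(X)\<close> is uniform on the image of the support.
  That image lies in \<open>Q\<^sub>\<gamma>\<close> and contains every shrunken copy \<open>t Q\<^sub>\<gamma>\<close>, \<open>t < 1\<close>, because a Gram form
  bounded below by a positive multiple of the identity forces \<open>\<parallel>r\<^sub>i\<parallel> < 1\<close>; as \<open>t Q\<^sub>\<gamma>\<close> has measure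
  \<open>t\<^sup>N |Q\<^sub>\<gamma>|\<close>, the image and \<open>Q\<^sub>\<gamma>\<close> differ by a null set.\<close>

section \<open>Triangular changes of variables in \<open>\<real>\<^sup>I\<close>\<close>

abbreviation lborel_Pi :: "'i set \<Rightarrow> ('i \<Rightarrow> real) measure" where
  "lborel_Pi I \<equiv> PiM I (\<lambda>_. lborel)"

lemma product_sigma_finite_lborel: "product_sigma_finite (\<lambda>_. lborel :: real measure)"
  by (simp add: product_sigma_finite_def lborel.sigma_finite_measure_axioms)

lemma borel_measurable_PiM_component [measurable]:
  "(\<lambda>x. x j) \<in> borel_measurable (lborel_Pi I)"
proof (cases "j \<in> I")
  case True
  then show ?thesis by measurable
next
  case False
  then have "x j = undefined" if "x \<in> space (lborel_Pi I)" for x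
    using that by (auto simp: space_PiM PiE_def extensional_def)
  then show ?thesis
    by (subst measurable_cong[where g = "\<lambda>_. undefined"]) auto
qed

lemma nn_integral_PiM_lborel_affine_insert:
  fixes a h :: "'i \<Rightarrow> ('i \<Rightarrow> real) \<Rightarrow> real"
  assumes S: "finite S" "b \<notin> S"
    and IH: "\<And>g. g \<in> borel_measurable (lborel_Pi S) \<Longrightarrow>
      (\<integral>\<^sup>+x. g (\<lambda>i\<in>S. a i x * x i + h i x) * ennreal (\<Prod>i\<in>S. \<bar>a i x\<bar>) \<partial>lborel_Pi S)
        = integral\<^sup>N (lborel_Pi S) g"
    and indep: "\<And>i x y. i \<in> insert b S \<Longrightarrow> a i (x(b := y)) = a i x \<and> h i (x(b := y)) = h i x"
    and nonzero: "\<And>x. a b x \<noteq> 0"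
    and meas_a: "\<And>i. i \<in> insert b S \<Longrightarrow> a i \<in> borel_measurable (lborel_Pi (insert b S))"
    and meas_h: "\<And>i. i \<in> insert b S \<Longrightarrow> h i \<in> borel_measurable (lborel_Pi (insert b S))"
    and f: "f \<in> borel_measurable (lborel_Pi (insert b S))"
  shows "(\<integral>\<^sup>+x. f (\<lambda>i\<in>insert b S. a i x * x i + h i x) * ennreal (\<Prod>i\<in>insert b S. \<bar>a i x\<bar>)
      \<partial>lborel_Pi (insert b S)) = integral\<^sup>N (lborel_Pi (insert b S)) f"
proof -
  define \<Phi> where "\<Phi> J x = (\<lambda>i\<in>J. a i x * x i + h i x)" for J x
  define P where "P J x = (\<Prod>i\<in>J. \<bar>a i x\<bar>)" for J x
  define G where "G w = (\<integral>\<^sup>+z. f (w(b := z)) \<partial>lborel)" for w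
  have \<Phi>_upd: "\<Phi> (insert b S) (x(b := y)) = (\<Phi> S x)(b := h b x + a b x * y)" for x y
    using indep S by (auto simp: \<Phi>_def fun_eq_iff)
  have P_upd: "P (insert b S) (x(b := y)) = \<bar>a b x\<bar> * P S x" for x y
    using indep S by (simp add: P_def)
  have \<Phi>_meas: "\<Phi> (insert b S) \<in> measurable (lborel_Pi (insert b S)) (lborel_Pi (insert b S))"
    unfolding \<Phi>_def
    by (rule measurable_restrict) (simp add: meas_a meas_h borel_measurable_add borel_measurable_times)
  have P_nonneg: "P J x \<ge> 0" for J x
    by (simp add: P_def prod_nonneg)
  have P_meas: "P (insert b S) \<in> borel_measurable (lborel_Pi (insert b S))"
    unfolding P_def by (intro borel_measurable_prod borel_measurable_abs meas_a)
  have G_meas: "G \<in> borel_measurable (lborel_Pi S)"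
    unfolding G_def using measurable_comp[OF measurable_add_dim[of b S "\<lambda>_. lborel"] f]
    by (intro lborel.borel_measurable_nn_integral) (simp add: comp_def case_prod_beta')
  have inner: "(\<integral>\<^sup>+y. f (\<Phi> (insert b S) (x(b := y))) * ennreal (P (insert b S) (x(b := y))) \<partial>lborel)
      = G (\<Phi> S x) * ennreal (P S x)" if x: "x \<in> space (lborel_Pi S)" for x
  proof -
    have \<Phi>_space: "\<Phi> S x \<in> space (lborel_Pi S)" by (simp add: \<Phi>_def space_PiM)
    have f_upd: "(\<lambda>z. f ((\<Phi> S x)(b := z))) \<in> borel_measurable borel"
      using measurable_comp[OF measurable_component_update[OF \<Phi>_space S(2)] f] by (simp add: comp_def)
    have "(\<integral>\<^sup>+y. f (\<Phi> (insert b S) (x(b := y))) * ennreal (P (insert b S) (x(b := y))) \<partial>lborel)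
        = (\<integral>\<^sup>+y. ennreal (P S x) * (ennreal \<bar>a b x\<bar> * f ((\<Phi> S x)(b := h b x + a b x * y))) \<partial>lborel)"
      using P_nonneg[of S x] by (intro nn_integral_cong) (simp add: \<Phi>_upd P_upd ennreal_mult ac_simps)
    also have "\<dots> = ennreal (P S x) * (ennreal \<bar>a b x\<bar> * (\<integral>\<^sup>+y. f ((\<Phi> S x)(b := h b x + a b x * y)) \<partial>lborel))"
      using f_upd by (simp add: nn_integral_cmult)
    also have "\<dots> = ennreal (P S x) * G (\<Phi> S x)"
      unfolding G_def using nn_integral_real_affine[OF f_upd nonzero[of x], of "h b x"] by simp
    finally show ?thesis by (simp add: mult.commute)
  qed
  have "(\<integral>\<^sup>+x. f (\<Phi> (insert b S) x) * ennreal (P (insert b S) x) \<partial>lborel_Pi (insert b S))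
      = (\<integral>\<^sup>+x. \<integral>\<^sup>+y. f (\<Phi> (insert b S) (x(b := y))) * ennreal (P (insert b S) (x(b := y)))
          \<partial>lborel \<partial>lborel_Pi S)"
    using S measurable_comp[OF \<Phi>_meas f] P_meas
    by (intro product_sigma_finite.product_nn_integral_insert product_sigma_finite_lborel)
      (auto simp: comp_def)
  also have "\<dots> = (\<integral>\<^sup>+x. G (\<Phi> S x) * ennreal (P S x) \<partial>lborel_Pi S)"
    by (intro nn_integral_cong inner)
  also have "\<dots> = integral\<^sup>N (lborel_Pi S) G"
    using IH[OF G_meas] by (simp add: \<Phi>_def P_def)
  also have "\<dots> = integral\<^sup>N (lborel_Pi (insert b S)) f"
    unfolding G_def using S f
    by (intro product_sigma_finite.product_nn_integral_insert[symmetric] product_sigma_finite_lborel)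
  finally show ?thesis by (simp add: \<Phi>_def P_def)
qed

lemma nn_integral_PiM_lborel_triangular:
  fixes K :: "'i set" and rk :: "'i \<Rightarrow> 'b::linorder" and a h :: "'i \<Rightarrow> ('i \<Rightarrow> real) \<Rightarrow> real"
  assumes "finite K"
    and depends: "\<And>i x y. i \<in> K \<Longrightarrow> (\<And>j. j \<in> K \<Longrightarrow> rk j < rk i \<Longrightarrow> x j = y j) \<Longrightarrow>
      a i x = a i y \<and> h i x = h i y"
    and nonzero: "\<And>i x. i \<in> K \<Longrightarrow> a i x \<noteq> 0"
    and meas_a: "\<And>i I. i \<in> K \<Longrightarrow> I \<subseteq> K \<Longrightarrow> {j \<in> K. rk j < rk i} \<subseteq> I \<Longrightarrow>
      a i \<in> borel_measurable (lborel_Pi I)"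
    and meas_h: "\<And>i I. i \<in> K \<Longrightarrow> I \<subseteq> K \<Longrightarrow> {j \<in> K. rk j < rk i} \<subseteq> I \<Longrightarrow>
      h i \<in> borel_measurable (lborel_Pi I)"
    and f: "f \<in> borel_measurable (lborel_Pi K)"
  shows "(\<integral>\<^sup>+x. f (\<lambda>i\<in>K. a i x * x i + h i x) * ennreal (\<Prod>i\<in>K. \<bar>a i x\<bar>) \<partial>lborel_Pi K)
    = integral\<^sup>N (lborel_Pi K) f"
proof -
  define claim where "claim S \<longleftrightarrow> (\<forall>g \<in> borel_measurable (lborel_Pi S).
    (\<integral>\<^sup>+x. g (\<lambda>i\<in>S. a i x * x i + h i x) * ennreal (\<Prod>i\<in>S. \<bar>a i x\<bar>) \<partial>lborel_Pi S)
      = integral\<^sup>N (lborel_Pi S) g)" for S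
  have "S \<subseteq> K \<longrightarrow> (\<forall>i\<in>S. {j \<in> K. rk j < rk i} \<subseteq> S) \<longrightarrow> claim S" if "finite S" for S
    using that
  proof (induction S rule: finite_ranking_induct[where f = rk])
    case empty
    show ?case by (simp add: claim_def PiM_empty nn_integral_count_space_finite)
  next
    case (insert b S)
    show ?case
    proof (intro impI)
      assume sub: "insert b S \<subseteq> K" and closed: "\<forall>i\<in>insert b S. {j \<in> K. rk j < rk i} \<subseteq> insert b S"
      show "claim (insert b S)"
      proof (cases "b \<in> S")
        case True
        with insert.IH sub closed show ?thesis by (simp add: insert_absorb)
      next
        case False
        have "\<forall>i\<in>S. {j \<in> K. rk j < rk i} \<subseteq> S"
          using closed insert.hyps(2) by fastforce
        with insert.IH sub have IH: "claim S" by simp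
        have indep: "a i (x(b := y)) = a i x \<and> h i (x(b := y)) = h i x" if "i \<in> insert b S" for i x y
          using that sub insert.hyps(2) by (intro depends) fastforce+
        show ?thesis
          unfolding claim_def
          using IH sub closed insert.hyps(1) False nonzero
          by (intro ballI nn_integral_PiM_lborel_affine_insert[OF _ _ _ indep])
            (auto simp: claim_def intro!: meas_a meas_h)
      qed
    qed
  qed
  with \<open>finite K\<close> f show ?thesis by (simp add: claim_def)
qed

lemma distr_PiM_reindex_bij:
  fixes e :: "'j \<Rightarrow> 'i" and M :: "'i \<Rightarrow> 'a measure"
  assumes "product_sigma_finite M" and "finite I" and bij: "bij_betw e J I"
  shows "distr (PiM I M) (PiM J (\<lambda>j. M (e j))) (\<lambda>x. \<lambda>j\<in>J. x (e j)) = PiM J (\<lambda>j. M (e j))"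
proof (rule product_sigma_finite.PiM_eqI)
  interpret product_sigma_finite M by fact
  show "product_sigma_finite (\<lambda>j. M (e j))"
    by unfold_locales
  show "finite J" using bij \<open>finite I\<close> bij_betw_finite by blast
  show "sets (distr (PiM I M) (PiM J (\<lambda>j. M (e j))) (\<lambda>x. \<lambda>j\<in>J. x (e j))) = sets (PiM J (\<lambda>j. M (e j)))"
    by simp
  fix A assume A: "\<And>j. j \<in> J \<Longrightarrow> A j \<in> sets (M (e j))"
  have e_meas: "(\<lambda>x. \<lambda>j\<in>J. x (e j)) \<in> measurable (PiM I M) (PiM J (\<lambda>j. M (e j)))"
    using bij by (intro measurable_restrict measurable_component_singleton) (auto simp: bij_betw_def)
  have preimage: "(\<lambda>x. \<lambda>j\<in>J. x (e j)) -` Pi\<^sub>E J A \<inter> space (PiM I M) = Pi\<^sub>E I (\<lambda>i. A (inv_into J e i))"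
    using bij A[THEN sets.sets_into_space]
    by (auto simp: space_PiM PiE_iff bij_betw_def inv_into_into f_inv_into_f
        intro: inv_into_f_f[symmetric] dest!: bspec) blast+
  have "emeasure (distr (PiM I M) (PiM J (\<lambda>j. M (e j))) (\<lambda>x. \<lambda>j\<in>J. x (e j))) (Pi\<^sub>E J A)
      = emeasure (PiM I M) (Pi\<^sub>E I (\<lambda>i. A (inv_into J e i)))"
    using A \<open>finite J\<close> by (simp add: emeasure_distr[OF e_meas] sets_PiM_I_finite preimage)
  also have "\<dots> = (\<Prod>i\<in>I. emeasure (M i) (A (inv_into J e i)))"
    using A bij \<open>finite I\<close> by (intro emeasure_PiM) (auto simp: bij_betw_def inv_into_into f_inv_into_f)
  also have "\<dots> = (\<Prod>j\<in>J. emeasure (M (e j)) (A j))"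
    using bij by (simp add: prod.reindex_bij_betw[OF bij, symmetric] bij_betw_inv_into_left)
  finally show "emeasure (distr (PiM I M) (PiM J (\<lambda>j. M (e j))) (\<lambda>x. \<lambda>j\<in>J. x (e j))) (Pi\<^sub>E J A)
      = (\<Prod>j\<in>J. emeasure (M (e j)) (A j))" .
qed

lemma emeasure_PiM_lborel_scaled:
  fixes t :: real
  assumes I: "finite I" and t: "t > 0" and S: "S \<in> sets (lborel_Pi I)"
  defines "St \<equiv> {y \<in> space (lborel_Pi I). (\<lambda>i\<in>I. y i / t) \<in> S}"
  shows "St \<in> sets (lborel_Pi I)"
    and "emeasure (lborel_Pi I) St = ennreal (t ^ card I) * emeasure (lborel_Pi I) S"
proof -
  have scale_meas: "(\<lambda>y. \<lambda>i\<in>I. y i / t) \<in> measurable (lborel_Pi I) (lborel_Pi I)"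
    by (rule measurable_restrict) simp
  then show St: "St \<in> sets (lborel_Pi I)"
    using measurable_sets[OF scale_meas S] by (simp add: St_def vimage_def Int_def conj_commute)
  have "emeasure (lborel_Pi I) St
      = (\<integral>\<^sup>+x. indicator St (\<lambda>i\<in>I. t * x i + 0) * ennreal (\<Prod>i\<in>I. \<bar>t\<bar>) \<partial>lborel_Pi I)"
    using I t St by (subst nn_integral_PiM_lborel_triangular[where rk = "\<lambda>_. 0::nat"]) auto
  also have "\<dots> = (\<integral>\<^sup>+x. ennreal (t ^ card I) * indicator S x \<partial>lborel_Pi I)"
  proof (rule nn_integral_cong)
    fix x assume "x \<in> space (lborel_Pi I)"
    then have "(\<lambda>i\<in>I. (\<lambda>i\<in>I. t * x i + 0) i / t) = x"
      using t by (auto simp: space_PiM PiE_def extensional_def fun_eq_iff)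
    then show "indicator St (\<lambda>i\<in>I. t * x i + 0) * ennreal (\<Prod>i\<in>I. \<bar>t\<bar>)
        = ennreal (t ^ card I) * indicator S x"
      using t by (simp add: St_def indicator_def space_PiM mult.commute)
  qed
  also have "\<dots> = ennreal (t ^ card I) * emeasure (lborel_Pi I) S"
    using S by (simp add: nn_integral_cmult_indicator)
  finally show "emeasure (lborel_Pi I) St = ennreal (t ^ card I) * emeasure (lborel_Pi I) S" .
qed

lemma ennreal_le_if_power_scaled_le:
  fixes a b :: ennreal
  assumes "\<And>t::real. 0 < t \<Longrightarrow> t < 1 \<Longrightarrow> ennreal (t ^ n) * a \<le> b"
  shows "a \<le> b"
proof (rule tendsto_upperbound)
  have "((\<lambda>t::real. ennreal (t ^ n) * a) \<longlongrightarrow> ennreal (1 ^ n) * a) (at_left 1)"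
    by (intro tendsto_intros) simp
  then show "((\<lambda>t::real. ennreal (t ^ n) * a) \<longlongrightarrow> a) (at_left 1)"
    by simp
  show "\<forall>\<^sub>F t in at_left 1. ennreal (t ^ n) * a \<le> b"
    using eventually_at_left_real[of 0 "1::real"] by (rule eventually_mono) (use assms in auto)
qed (rule trivial_limit_at_left_real)

lemma AE_eq_if_le_and_nn_integral_ge:
  assumes f: "f \<in> borel_measurable M" and g: "g \<in> borel_measurable M"
    and le: "\<And>x. x \<in> space M \<Longrightarrow> f x \<le> g x"
    and finite: "integral\<^sup>N M g \<noteq> \<infinity>" and ge: "integral\<^sup>N M g \<le> integral\<^sup>N M f"
  shows "AE x in M. f x = g x"
proof -
  have "integral\<^sup>N M f \<le> integral\<^sup>N M g"
    using le by (intro nn_integral_mono) auto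
  with ge finite have "(\<integral>\<^sup>+x. g x - f x \<partial>M) = 0"
    using le by (subst nn_integral_diff) (auto simp: f g top_unique)
  then have "AE x in M. g x - f x = 0"
    using f g by (subst nn_integral_0_iff_AE[symmetric]) auto
  then show ?thesis
    using AE_space by eventually_elim (use le in \<open>auto simp: diff_eq_0_iff_ennreal intro: antisym\<close>)
qed

lemma prob_space_eq_uniform_measureI:
  fixes c :: ennreal
  assumes "prob_space N" and sets_eq: "sets N = sets M" and Q: "Q \<in> sets M"
    and proportional: "\<And>A. A \<in> sets M \<Longrightarrow> emeasure N A = c * emeasure M (Q \<inter> A)"
  shows "N = uniform_measure M Q"
proof (rule measure_eqI)
  show "sets N = sets (uniform_measure M Q)"
    using sets_eq by simp
  have "c * emeasure M Q = emeasure N (space N)"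
    using proportional[of "space M"] sets.sets_into_space[OF Q] sets_eq_imp_space_eq[OF sets_eq]
    by (simp add: Int_absorb2)
  then have normalized: "c * emeasure M Q = 1"
    using prob_space.emeasure_space_1[OF \<open>prob_space N\<close>] by simp
  then have "emeasure M Q \<noteq> 0" "emeasure M Q \<noteq> \<infinity>"
    by (auto simp: ennreal_mult_top split: if_splits)
  fix A assume "A \<in> sets N"
  then have A: "A \<in> sets M" using sets_eq by simp
  have "emeasure N A = c * emeasure M (Q \<inter> A) * emeasure M Q / emeasure M Q"
    using proportional[OF A] \<open>emeasure M Q \<noteq> 0\<close> \<open>emeasure M Q \<noteq> \<infinity>\<close>
    by (simp add: ennreal_mult_divide_eq)
  also have "\<dots> = emeasure M (Q \<inter> A) / emeasure M Q"
    by (metis normalized mult.assoc mult.commute mult_1)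
  also have "\<dots> = emeasure (uniform_measure M Q) A"
    using Q A by simp
  finally show "emeasure N A = emeasure (uniform_measure M Q) A" .
qed

section \<open>Quadratic forms\<close>

definition quad_form :: "nat \<Rightarrow> (nat \<Rightarrow> nat \<Rightarrow> real) \<Rightarrow> (nat \<Rightarrow> real) \<Rightarrow> real" where
  "quad_form n G v = (\<Sum>j=1..n. \<Sum>k=1..n. v j * G j k * v k)"

lemma sum_atLeastAtMost_eq_prefix_plus_last:
  fixes g :: "nat \<Rightarrow> 'a::comm_monoid_add"
  assumes "1 \<le> j" "j \<le> n" "\<And>l. j < l \<Longrightarrow> l \<le> n \<Longrightarrow> g l = 0"
  shows "(\<Sum>l=1..n. g l) = (\<Sum>l=1..j-1. g l) + g j"
proof -
  have "(\<Sum>l=1..n. g l) = (\<Sum>l=1..j. g l)"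
    using assms by (intro sum.mono_neutral_right) auto
  also have "\<dots> = (\<Sum>l=1..j-1. g l) + g j"
    using assms(1) by (cases j) (auto simp: sum.cl_ivl_Suc)
  finally show ?thesis .
qed

lemma sum_sum_gram_eq_sum_squares:
  fixes A :: "'l \<Rightarrow> 'j \<Rightarrow> real"
  shows "(\<Sum>j\<in>S. \<Sum>k\<in>S. v j * (\<Sum>l\<in>L. A l j * A l k) * v k) = (\<Sum>l\<in>L. (\<Sum>j\<in>S. A l j * v j)\<^sup>2)"
proof -
  have "(\<Sum>l\<in>L. (\<Sum>j\<in>S. A l j * v j)\<^sup>2) = (\<Sum>l\<in>L. \<Sum>j\<in>S. \<Sum>k\<in>S. (A l j * v j) * (A l k * v k))"
    by (simp add: power2_eq_square sum_product)
  also have "\<dots> = (\<Sum>j\<in>S. \<Sum>k\<in>S. \<Sum>l\<in>L. (A l j * v j) * (A l k * v k))"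
    by (subst sum.swap) (intro sum.cong refl sum.swap)
  also have "\<dots> = (\<Sum>j\<in>S. \<Sum>k\<in>S. v j * (\<Sum>l\<in>L. A l j * A l k) * v k)"
    by (intro sum.cong refl) (simp add: sum_distrib_left sum_distrib_right mult_ac)
  finally show ?thesis ..
qed

lemma quad_form_vanishing_tail:
  assumes "i \<le> n" "\<And>k. i < k \<Longrightarrow> v k = 0"
  shows "quad_form n G v = quad_form i G v"
proof -
  have "quad_form n G v = (\<Sum>j=1..n. \<Sum>k=1..i. v j * G j k * v k)"
    unfolding quad_form_def using assms by (intro sum.cong refl sum.mono_neutral_right) auto
  also have "\<dots> = quad_form i G v"
    unfolding quad_form_def using assms by (intro sum.mono_neutral_right) auto
  finally show ?thesis .
qed

lemma quad_form_add_diagonal: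
  "quad_form n (\<lambda>j k. t * G j k + (if j = k then c else 0)) v
    = t * quad_form n G v + c * (\<Sum>j=1..n. (v j)\<^sup>2)"
proof -
  have "(\<Sum>k=1..n. v j * (t * G j k + (if j = k then c else 0)) * v k)
      = t * (\<Sum>k=1..n. v j * G j k * v k) + c * (v j)\<^sup>2" if "j \<in> {1..n}" for j
  proof -
    have "(\<Sum>k=1..n. v j * (t * G j k + (if j = k then c else 0)) * v k)
        = (\<Sum>k=1..n. t * (v j * G j k * v k) + (if k = j then c * v j * v k else 0))"
      by (intro sum.cong) (auto simp: algebra_simps)
    then show ?thesis
      using that by (simp add: sum.distrib sum_distrib_left sum.delta power2_eq_square)
  qed
  then show ?thesis
    by (simp add: quad_form_def sum.distrib sum_distrib_left)
qed

lemma quad_form_two_point: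
  assumes "k \<in> {1..n}" "i \<in> {1..n}" "k \<noteq> i"
  shows "quad_form n G (\<lambda>j. if j = k then 1 else if j = i then s else 0)
    = G k k + s * G k i + s * G i k + s * s * G i i"
proof -
  define v where "v = (\<lambda>j. if j = k then 1 else if j = i then s else (0::real))"
  have sub: "{k, i} \<subseteq> {1..n}" using assms by auto
  have "quad_form n G v = (\<Sum>j\<in>{k, i}. \<Sum>l=1..n. v j * G j l * v l)"
    unfolding quad_form_def using sub by (intro sum.mono_neutral_right) (auto simp: v_def)
  also have "\<dots> = (\<Sum>j\<in>{k, i}. \<Sum>l\<in>{k, i}. v j * G j l * v l)"
    using sub by (intro sum.cong refl sum.mono_neutral_right) (auto simp: v_def)
  also have "\<dots> = G k k + s * G k i + s * G i k + s * s * G i i"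
    using assms by (simp add: v_def algebra_simps)
  finally show ?thesis by (simp add: v_def)
qed

lemma upper_triangular_solvable:
  fixes U :: "nat \<Rightarrow> nat \<Rightarrow> real" and w :: "nat \<Rightarrow> real"
  assumes lower_zero: "\<And>l k. 1 \<le> k \<Longrightarrow> k < l \<Longrightarrow> l \<le> n \<Longrightarrow> U l k = 0"
    and diag: "\<And>l. 1 \<le> l \<Longrightarrow> l \<le> n \<Longrightarrow> U l l \<noteq> 0"
  shows "\<exists>v. \<forall>l\<in>{1..n}. (\<Sum>k=1..n. U l k * v k) = w l"
proof -
  have "\<exists>v. \<forall>l. n - m < l \<and> l \<le> n \<longrightarrow> (\<Sum>k=1..n. U l k * v k) = w l" for m
  proof (induction m)
    case (Suc m)
    then obtain v where v: "\<forall>l. n - m < l \<and> l \<le> n \<longrightarrow> (\<Sum>k=1..n. U l k * v k) = w l" by blast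
    show ?case
    proof (cases "m < n")
      case False
      then show ?thesis using v by (metis Suc_diff_le diff_is_0_eq le_Suc_eq not_less)
    next
      case True
      \<comment> \<open>back substitution: row \<open>p\<close> is solved for \<open>v p\<close>, which the rows below \<open>p\<close> do not involve\<close>
      define p where "p = n - m"
      have p: "1 \<le> p" "p \<le> n" using True by (auto simp: p_def)
      define v' where "v' = v(p := (w p - (\<Sum>k\<in>{1..n}-{p}. U p k * v k)) / U p p)"
      have "(\<Sum>k=1..n. U l k * v' k) = w l" if l: "p \<le> l" "l \<le> n" for l
      proof (cases "l = p")
        case True
        have "(\<Sum>k=1..n. U p k * v' k) = U p p * v' p + (\<Sum>k\<in>{1..n}-{p}. U p k * v k)"
          using p by (subst sum.remove[of _ p]) (auto simp: v'_def intro!: sum.cong)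
        then show ?thesis using True diag[OF p] by (simp add: v'_def)
      next
        case False
        then have "(\<Sum>k=1..n. U l k * v' k) = (\<Sum>k=1..n. U l k * v k)"
          using lower_zero[of p l] l p by (intro sum.cong) (auto simp: v'_def)
        then show ?thesis using v l False by (auto simp: p_def)
      qed
      then show ?thesis by (intro exI[of _ v']) (auto simp: p_def)
    qed
  qed simp
  from this[of n] obtain v where "\<forall>l. 0 < l \<and> l \<le> n \<longrightarrow> (\<Sum>k=1..n. U l k * v k) = w l"
    by auto
  then show ?thesis by (intro exI[of _ v]) auto
qed

section \<open>The Gram map\<close>

definition rsq :: "nat \<Rightarrow> (nat \<times> nat \<Rightarrow> real) \<Rightarrow> real" where
  "rsq i r = (\<Sum>l=1..i-1. (r (i, l))\<^sup>2)"

definition rdiag :: "nat \<Rightarrow> (nat \<times> nat \<Rightarrow> real) \<Rightarrow> real" where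
  "rdiag i r = (if rsq i r < 1 then sqrt (1 - rsq i r) else 1)"

text \<open>With \<open>u\<^sub>k = (r\<^sub>k, d k r, 0, \<dots>)\<close> the coordinate \<open>(i, k)\<close> is \<open>\<gamma> \<langle>u\<^sub>k, u\<^sub>i\<rangle>\<close>.
  For \<open>d k r = sqrt (1 - rsq k r)\<close> the \<open>u\<^sub>k\<close> are unit vectors; \<open>rdiag\<close> agrees with this on the
  support of the density but keeps the map a triangular bijection of the whole space.\<close>
definition gram_coords ::
    "nat \<Rightarrow> real \<Rightarrow> (nat \<Rightarrow> (nat \<times> nat \<Rightarrow> real) \<Rightarrow> real) \<Rightarrow> (nat \<times> nat \<Rightarrow> real) \<Rightarrow> (nat \<times> nat \<Rightarrow> real)"
  where "gram_coords T \<gamma> d r =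
    restrict (\<lambda>(i, k). \<gamma> * (d k r * r (i, k) + (\<Sum>l=1..k-1. r (k, l) * r (i, l)))) (Ridx T)"

definition gram_mat :: "real \<Rightarrow> (nat \<times> nat \<Rightarrow> real) \<Rightarrow> nat \<Rightarrow> nat \<Rightarrow> real" where
  "gram_mat \<gamma> y j k = (if j = k then \<gamma> else if j < k then y (k, j) else y (j, k))"

text \<open>The support of \<open>rdens\<close>; the boundary sphere is allowed only for \<open>r\<^sub>T\<close>, whose factor has exponent 0.\<close>
definition rdomain :: "nat \<Rightarrow> (nat \<times> nat \<Rightarrow> real) set" where
  "rdomain T = {r. (\<forall>i<T. rsq i r < 1) \<and> rsq T r \<le> 1}"

definition psd_set :: "nat \<Rightarrow> real \<Rightarrow> (nat \<times> nat \<Rightarrow> real) set" where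
  "psd_set T \<gamma> = {y \<in> space (lborel_Pi (Ridx T)). \<forall>v. 0 \<le> quad_form T (gram_mat \<gamma> y) v}"

lemma rsq_nonneg: "0 \<le> rsq i r"
  by (simp add: rsq_def sum_nonneg)

lemma rsq_le_1 [simp]: "i \<le> 1 \<Longrightarrow> rsq i r = 0"
  by (simp add: rsq_def)

lemma rdiag_pos: "0 < rdiag i r"
  by (simp add: rdiag_def)

lemma rdiag_neq_0 [simp]: "rdiag i r \<noteq> 0"
  using rdiag_pos[of i r] by linarith

definition tri_factor :: "nat \<Rightarrow> real \<Rightarrow> (nat \<times> nat \<Rightarrow> real) \<Rightarrow> nat \<Rightarrow> nat \<Rightarrow> real" where
  "tri_factor i d r l j = (if l < j then r (j, l) else if l = j then (if j = i then d else rdiag j r) else 0)"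

lemma gram_mat_gram_coords:
  fixes d :: real
  assumes "i \<le> T" and below: "\<And>j. j < i \<Longrightarrow> rsq j r < 1" and jk: "j \<in> {1..i}" "k \<in> {1..i}"
  defines "U \<equiv> tri_factor i d r"
  shows "gram_mat \<gamma> (gram_coords T \<gamma> rdiag r) j k
    = \<gamma> * (\<Sum>l=1..i. U l j * U l k) + (if j = i \<and> k = i then \<gamma> * (1 - rsq i r - d\<^sup>2) else 0)"
proof -
  have column: "(\<Sum>l=1..i. U l j * U l k) = (\<Sum>l=1..j-1. r (j, l) * r (k, l)) + U j j * U j k"
    if "1 \<le> j" "j \<le> k" "k \<le> i" for j k
  proof -
    have "(\<Sum>l=1..i. U l j * U l k) = (\<Sum>l=1..j-1. U l j * U l k) + U j j * U j k"
      using that by (intro sum_atLeastAtMost_eq_prefix_plus_last) (auto simp: U_def tri_factor_def)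
    also have "(\<Sum>l=1..j-1. U l j * U l k) = (\<Sum>l=1..j-1. r (j, l) * r (k, l))"
      using that by (intro sum.cong) (auto simp: U_def tri_factor_def)
    finally show ?thesis .
  qed
  have off_diagonal: "gram_mat \<gamma> (gram_coords T \<gamma> rdiag r) j k = \<gamma> * (\<Sum>l=1..i. U l j * U l k)"
    if "1 \<le> j" "j < k" "k \<le> i" for j k
    using that column[of j k] \<open>i \<le> T\<close>
    by (simp add: gram_mat_def gram_coords_def Ridx_def U_def tri_factor_def algebra_simps)
  have diagonal: "(\<Sum>l=1..i. U l j * U l j) = rsq j r + (U j j)\<^sup>2" if "1 \<le> j" "j \<le> i" for j
    using that column[of j j] by (simp add: rsq_def power2_eq_square)
  show ?thesis
  proof (cases j k rule: linorder_cases)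
    case less
    then show ?thesis using off_diagonal[of j k] jk by auto
  next
    case equal
    have "rsq j r + (rdiag j r)\<^sup>2 = 1" if "j < i"
      using below[OF that] rsq_nonneg[of j r] by (simp add: rdiag_def)
    then show ?thesis
      using equal diagonal[of j] jk by (cases "j = i") (auto simp: gram_mat_def U_def tri_factor_def algebra_simps)
  next
    case greater
    then show ?thesis
      using off_diagonal[of k j] jk by (auto simp: gram_mat_def mult.commute)
  qed
qed

lemma gram_coords_in_psd_set:
  assumes r: "r \<in> rdomain T" and "0 \<le> \<gamma>"
  shows "gram_coords T \<gamma> rdiag r \<in> psd_set T \<gamma>"
proof -
  define U where "U = tri_factor T (sqrt (1 - rsq T r)) r"
  have "gram_mat \<gamma> (gram_coords T \<gamma> rdiag r) j k = \<gamma> * (\<Sum>l=1..T. U l j * U l k)"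
    if "j \<in> {1..T}" "k \<in> {1..T}" for j k
    using gram_mat_gram_coords[OF order.refl _ that, where d = "sqrt (1 - rsq T r)" and \<gamma> = \<gamma>] r
    by (simp add: rdomain_def U_def)
  then have "quad_form T (gram_mat \<gamma> (gram_coords T \<gamma> rdiag r)) v
      = (\<Sum>j=1..T. \<Sum>k=1..T. \<gamma> * (v j * (\<Sum>l=1..T. U l j * U l k) * v k))" for v
    unfolding quad_form_def by (intro sum.cong refl) simp
  then show ?thesis
    using \<open>0 \<le> \<gamma>\<close>
    by (simp add: psd_set_def gram_coords_def space_PiM sum_distrib_left[symmetric]
        sum_sum_gram_eq_sum_squares sum_nonneg)
qed

lemma quad_form_gram_coords_nonpos:
  assumes "1 \<le> i" "i \<le> T" and below: "\<And>j. j < i \<Longrightarrow> rsq j r < 1" and "1 \<le> rsq i r" and "0 \<le> \<gamma>"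
  obtains v where "v i = 1" and "quad_form T (gram_mat \<gamma> (gram_coords T \<gamma> rdiag r)) v \<le> 0"
proof -
  define U where "U = tri_factor i 1 r"
  \<comment> \<open>the \<open>i\<close>-th column of \<open>U\<close> is \<open>(r\<^sub>i, 1)\<close>; a solution of \<open>U v = e\<^sub>i\<close> leaves \<open>\<gamma> (1 - rsq i r)\<close> as value of the form\<close>
  have "\<exists>v. \<forall>l\<in>{1..i}. (\<Sum>k=1..i. U l k * v k) = (if l = i then 1 else 0)"
    by (rule upper_triangular_solvable) (auto simp: U_def tri_factor_def)
  then obtain v where v: "\<forall>l\<in>{1..i}. (\<Sum>k=1..i. U l k * v k) = (if l = i then 1 else 0)" ..
  define v' where "v' k = (if k \<le> i then v k else 0)" for k
  have Uv': "(\<Sum>k=1..i. U l k * v' k) = (if l = i then 1 else 0)" if "l \<in> {1..i}" for l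
    using v that by (simp add: v'_def)
  have "v' i = 1"
  proof -
    have "(\<Sum>k=1..i. U i k * v' k) = (\<Sum>k=1..i-1. U i k * v' k) + U i i * v' i"
      using \<open>1 \<le> i\<close> by (intro sum_atLeastAtMost_eq_prefix_plus_last) auto
    also have "(\<Sum>k=1..i-1. U i k * v' k) = 0"
      by (intro sum.neutral) (auto simp: U_def tri_factor_def)
    finally show ?thesis using Uv'[of i] \<open>1 \<le> i\<close> by (simp add: U_def tri_factor_def)
  qed
  define G where "G = gram_mat \<gamma> (gram_coords T \<gamma> rdiag r)"
  have G: "v' j * G j k * v' k = \<gamma> * (v' j * (\<Sum>l=1..i. U l j * U l k) * v' k)
      - (if j = i \<and> k = i then \<gamma> * rsq i r else 0)" if "j \<in> {1..i}" "k \<in> {1..i}" for j k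
    using gram_mat_gram_coords[OF \<open>i \<le> T\<close> below that, where d = 1 and \<gamma> = \<gamma>] \<open>v' i = 1\<close>
    unfolding G_def U_def by (auto simp: algebra_simps)
  have corner_row: "(\<Sum>k=1..i. if j = i \<and> k = i then \<gamma> * rsq i r else 0) = (if j = i then \<gamma> * rsq i r else 0)"
    for j using \<open>1 \<le> i\<close> by (cases "j = i") simp_all
  have "quad_form T G v' = quad_form i G v'"
    using \<open>i \<le> T\<close> by (intro quad_form_vanishing_tail) (auto simp: v'_def)
  also have "\<dots> = (\<Sum>j=1..i. \<Sum>k=1..i. \<gamma> * (v' j * (\<Sum>l=1..i. U l j * U l k) * v' k)
      - (if j = i \<and> k = i then \<gamma> * rsq i r else 0))"
    unfolding quad_form_def by (intro sum.cong refl G)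
  also have "\<dots> = \<gamma> * (\<Sum>j=1..i. \<Sum>k=1..i. v' j * (\<Sum>l=1..i. U l j * U l k) * v' k) - \<gamma> * rsq i r"
    using \<open>1 \<le> i\<close> by (simp only: sum_subtractf sum_distrib_left corner_row) simp
  also have "(\<Sum>j=1..i. \<Sum>k=1..i. v' j * (\<Sum>l=1..i. U l j * U l k) * v' k) = 1"
  proof -
    have "(\<Sum>l=1..i. (\<Sum>j=1..i. U l j * v' j)\<^sup>2) = (\<Sum>l=1..i. if l = i then 1 else 0)"
      using Uv' by (intro sum.cong) auto
    then show ?thesis
      using \<open>1 \<le> i\<close> by (simp add: sum_sum_gram_eq_sum_squares)
  qed
  finally have "quad_form T G v' = \<gamma> * (1 - rsq i r)"
    by (simp add: algebra_simps)
  moreover have "\<gamma> * (1 - rsq i r) \<le> 0"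
    using assms(4,5) by (simp add: mult_nonneg_nonpos)
  ultimately show ?thesis
    using that[of v'] \<open>v' i = 1\<close> unfolding G_def by simp
qed

lemma gram_mat_scaled:
  assumes "t \<noteq> 0" "j \<in> {1..T}" "k \<in> {1..T}"
  shows "gram_mat \<gamma> y j k
    = t * gram_mat \<gamma> (\<lambda>p\<in>Ridx T. y p / t) j k + (if j = k then (1 - t) * \<gamma> else 0)"
  using assms by (auto simp: gram_mat_def Ridx_def algebra_simps)

lemma rdomain_if_scaled_gram_coords_in_psd_set:
  assumes "0 < \<gamma>" "0 < t" "t < 1"
    and psd: "(\<lambda>p\<in>Ridx T. gram_coords T \<gamma> rdiag r p / t) \<in> psd_set T \<gamma>"
  shows "r \<in> rdomain T"
proof (rule ccontr)
  assume "r \<notin> rdomain T"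
  then have "\<exists>i. i \<le> T \<and> 1 \<le> rsq i r"
    unfolding rdomain_def by (auto simp: not_less intro: less_imp_le)
  define i where "i = (LEAST i. i \<le> T \<and> 1 \<le> rsq i r)"
  have i: "i \<le> T" "1 \<le> rsq i r"
    using LeastI_ex[OF \<open>\<exists>i. _\<close>] by (simp_all add: i_def)
  have below: "rsq j r < 1" if "j < i" for j
    using not_less_Least[OF that[unfolded i_def]] i that by force
  have "1 \<le> i"
    using i by (cases i) auto
  obtain v where "v i = 1" and nonpos: "quad_form T (gram_mat \<gamma> (gram_coords T \<gamma> rdiag r)) v \<le> 0"
    using quad_form_gram_coords_nonpos[OF \<open>1 \<le> i\<close> i(1) below i(2), of \<gamma>] \<open>0 < \<gamma>\<close> by auto
  \<comment> \<open>a scaled point of the cone makes the Gram matrix uniformly positive definite\<close>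
  have "quad_form T (gram_mat \<gamma> (gram_coords T \<gamma> rdiag r)) v
      = quad_form T (\<lambda>j k. t * gram_mat \<gamma> (\<lambda>p\<in>Ridx T. gram_coords T \<gamma> rdiag r p / t) j k
          + (if j = k then (1 - t) * \<gamma> else 0)) v"
    unfolding quad_form_def using gram_mat_scaled[of t _ T _ \<gamma> "gram_coords T \<gamma> rdiag r"] \<open>0 < t\<close>
    by (intro sum.cong refl) simp
  also have "\<dots> = t * quad_form T (gram_mat \<gamma> (\<lambda>p\<in>Ridx T. gram_coords T \<gamma> rdiag r p / t)) v
      + (1 - t) * \<gamma> * (\<Sum>j=1..T. (v j)\<^sup>2)"
    by (rule quad_form_add_diagonal)
  finally have split: "quad_form T (gram_mat \<gamma> (gram_coords T \<gamma> rdiag r)) v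
      = t * quad_form T (gram_mat \<gamma> (\<lambda>p\<in>Ridx T. gram_coords T \<gamma> rdiag r p / t)) v
        + (1 - t) * \<gamma> * (\<Sum>j=1..T. (v j)\<^sup>2)" .
  have "0 \<le> t * quad_form T (gram_mat \<gamma> (\<lambda>p\<in>Ridx T. gram_coords T \<gamma> rdiag r p / t)) v"
    using psd \<open>0 < t\<close> by (simp add: psd_set_def)
  moreover have "1 \<le> (\<Sum>j=1..T. (v j)\<^sup>2)"
    using member_le_sum[of i "{1..T}" "\<lambda>j. (v j)\<^sup>2"] i \<open>1 \<le> i\<close> \<open>v i = 1\<close> by simp
  then have "0 < (1 - t) * \<gamma> * (\<Sum>j=1..T. (v j)\<^sup>2)"
    using assms(1,3) by simp
  ultimately show False
    using split nonpos by linarith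
qed

definition transpose_coords :: "nat \<Rightarrow> (nat \<times> nat \<Rightarrow> real) \<Rightarrow> (nat \<times> nat \<Rightarrow> real)" where
  "transpose_coords T y = (\<lambda>p\<in>Pidx T. y (snd p, fst p))"

lemma finite_Ridx: "finite (Ridx T)"
  by (rule finite_subset[of _ "{..T} \<times> {..T}"]) (auto simp: Ridx_def)

lemma bij_betw_swap_Pidx_Ridx: "bij_betw (\<lambda>p. (snd p, fst p)) (Pidx T) (Ridx T)"
  by (rule bij_betwI[where g = "\<lambda>p. (snd p, fst p)"]) (auto simp: Pidx_def Ridx_def)

lemma measurable_transpose_coords:
  "transpose_coords T \<in> measurable (lborel_Pi (Ridx T)) (lborel_Pi (Pidx T))"
  unfolding transpose_coords_def by (rule measurable_restrict) simp

lemma distr_transpose_coords: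
  "distr (lborel_Pi (Ridx T)) (lborel_Pi (Pidx T)) (transpose_coords T) = lborel_Pi (Pidx T)"
  using distr_PiM_reindex_bij[OF product_sigma_finite_lborel finite_Ridx bij_betw_swap_Pidx_Ridx]
  by (simp add: transpose_coords_def[abs_def])

lemma Qset_eq: "Qset T \<gamma> = space (lborel_Pi (Pidx T)) \<inter>
    {q. \<forall>v. (1 - \<gamma>) * (\<Sum>j=1..T. (v j)\<^sup>2) \<le> quad_form T (Sigma_mat q) v}"
  by (auto simp: Qset_def quad_form_def space_PiM)

lemma Qset_sets: "Qset T \<gamma> \<in> sets (lborel_Pi (Pidx T))"
proof -
  define C where "C = {q. \<forall>v. (1 - \<gamma>) * (\<Sum>j=1..T. (v j)\<^sup>2) \<le> quad_form T (Sigma_mat q) v}"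
  have "continuous_on UNIV (\<lambda>q. Sigma_mat q j k)" for j k
    unfolding Sigma_mat_def by (cases "j = k"; cases "j < k") (simp_all add: continuous_on_component)
  then have "closed C"
    unfolding C_def quad_form_def
    by (intro closed_Collect_all closed_Collect_le continuous_on_const continuous_on_sum
        continuous_on_mult)
  then have "C \<in> sets borel"
    by (rule borel_closed)
  moreover have "(\<lambda>q. q) \<in> borel_measurable (lborel_Pi (Pidx T))"
    by (rule measurable_coordinatewise_then_product) simp
  ultimately have "(\<lambda>q. q) -` C \<inter> space (lborel_Pi (Pidx T)) \<in> sets (lborel_Pi (Pidx T))"
    by (intro measurable_sets)
  then show ?thesis
    by (simp add: Qset_eq C_def Int_commute)
qed

lemma transpose_coords_in_Qset_iff:
  assumes "y \<in> space (lborel_Pi (Ridx T))"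
  shows "transpose_coords T y \<in> Qset T \<gamma> \<longleftrightarrow> y \<in> psd_set T \<gamma>"
proof -
  have "quad_form T (Sigma_mat (transpose_coords T y)) v
      = quad_form T (\<lambda>j k. 1 * gram_mat \<gamma> y j k + (if j = k then 1 - \<gamma> else 0)) v" for v
    unfolding quad_form_def
    by (intro sum.cong refl) (auto simp: Sigma_mat_def gram_mat_def transpose_coords_def Pidx_def)
  then show ?thesis
    using assms quad_form_add_diagonal[of T 1 "gram_mat \<gamma> y" "1 - \<gamma>"]
    by (simp add: Qset_eq psd_set_def space_PiM transpose_coords_def)
qed

lemma psd_set_eq_vimage:
  "psd_set T \<gamma> = transpose_coords T -` Qset T \<gamma> \<inter> space (lborel_Pi (Ridx T))"
  using transpose_coords_in_Qset_iff by (auto simp: psd_set_def)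

lemma psd_set_sets: "psd_set T \<gamma> \<in> sets (lborel_Pi (Ridx T))"
  unfolding psd_set_eq_vimage by (rule measurable_sets[OF measurable_transpose_coords Qset_sets])

lemma psd_set_bounded:
  assumes y: "y \<in> psd_set T \<gamma>" and p: "p \<in> Ridx T"
  shows "\<bar>y p\<bar> \<le> \<gamma>"
proof -
  obtain i k where p_eq: "p = (i, k)" and ik: "k \<in> {1..T}" "i \<in> {1..T}" "k < i"
    using p by (auto simp: Ridx_def)
  \<comment> \<open>test the form on \<open>e\<^sub>k \<plusminus> e\<^sub>i\<close>\<close>
  have psd: "0 \<le> quad_form T (gram_mat \<gamma> y) v" for v
    using y by (simp add: psd_set_def)
  have "0 \<le> 2 * \<gamma> + 2 * s * y (i, k)" if "s * s = 1" for s
    using psd[of "\<lambda>j. if j = k then 1 else if j = i then s else 0"]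
      quad_form_two_point[OF ik(1,2), of "gram_mat \<gamma> y" s] ik that
    by (simp add: gram_mat_def algebra_simps)
  from this[of 1] this[of "-1"] show ?thesis
    by (simp add: p_eq abs_le_iff)
qed

lemma emeasure_psd_set_finite: "emeasure (lborel_Pi (Ridx T)) (psd_set T \<gamma>) < \<infinity>"
proof -
  have "psd_set T \<gamma> \<subseteq> Pi\<^sub>E (Ridx T) (\<lambda>_. {-\<gamma>..\<gamma>})"
  proof
    fix y assume y: "y \<in> psd_set T \<gamma>"
    then have "y \<in> extensional (Ridx T)"
      by (simp add: psd_set_def space_PiM PiE_iff)
    moreover have "\<forall>p\<in>Ridx T. y p \<in> {-\<gamma>..\<gamma>}"
      using psd_set_bounded[OF y] by (auto simp: abs_le_iff minus_le_iff)
    ultimately show "y \<in> Pi\<^sub>E (Ridx T) (\<lambda>_. {-\<gamma>..\<gamma>})"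
      by (simp add: PiE_iff)
  qed
  then have "emeasure (lborel_Pi (Ridx T)) (psd_set T \<gamma>)
      \<le> emeasure (lborel_Pi (Ridx T)) (Pi\<^sub>E (Ridx T) (\<lambda>_. {-\<gamma>..\<gamma>}))"
    by (intro emeasure_mono) (auto intro!: sets_PiM_I_finite finite_Ridx)
  also have "\<dots> = (\<Prod>p\<in>Ridx T. emeasure lborel {-\<gamma>..\<gamma>})"
    by (intro product_sigma_finite.emeasure_PiM finite_Ridx product_sigma_finite_lborel) auto
  also have "\<dots> < \<infinity>"
    by (simp add: less_top[symmetric] emeasure_lborel_Icc_eq power_eq_top_ennreal)
  finally show ?thesis .
qed

section \<open>Change of variables and the support\<close>

lemma borel_measurable_rsq [measurable]: "rsq i \<in> borel_measurable (lborel_Pi I)"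
  unfolding rsq_def by measurable

lemma borel_measurable_rdiag [measurable]: "rdiag i \<in> borel_measurable (lborel_Pi I)"
  unfolding rdiag_def by measurable

lemma measurable_gram_coords:
  assumes [measurable]: "\<And>k. d k \<in> borel_measurable (lborel_Pi (Ridx T))"
  shows "gram_coords T \<gamma> d \<in> measurable (lborel_Pi (Ridx T)) (lborel_Pi (Ridx T))"
  unfolding gram_coords_def[abs_def] by (rule measurable_restrict) (simp only: split_beta, measurable)

definition gram_jacobian :: "nat \<Rightarrow> real \<Rightarrow> (nat \<times> nat \<Rightarrow> real) \<Rightarrow> real" where
  "gram_jacobian T \<gamma> r = (\<Prod>p\<in>Ridx T. \<gamma> * rdiag (snd p) r)"

lemma borel_measurable_gram_jacobian [measurable]:
  "gram_jacobian T \<gamma> \<in> borel_measurable (lborel_Pi (Ridx T))"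
  unfolding gram_jacobian_def by measurable

lemma nn_integral_gram_coords:
  assumes "0 < \<gamma>" and f: "f \<in> borel_measurable (lborel_Pi (Ridx T))"
  shows "(\<integral>\<^sup>+r. f (gram_coords T \<gamma> rdiag r) * ennreal (gram_jacobian T \<gamma> r) \<partial>lborel_Pi (Ridx T))
    = integral\<^sup>N (lborel_Pi (Ridx T)) f"
proof -
  define a where "a p r = \<gamma> * rdiag (snd p) r" for p :: "nat \<times> nat" and r
  define h where "h p r = \<gamma> * (\<Sum>l=1..snd p - 1. r (snd p, l) * r (fst p, l))" for p :: "nat \<times> nat" and r
  \<comment> \<open>coordinate \<open>(i, k)\<close> only depends on the rows \<open>r\<^sub>k\<close>, \<open>k < i\<close>, and on the first \<open>k - 1\<close> entries of \<open>r\<^sub>i\<close>\<close>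
  define rk where "rk p = fst p * T + snd p" for p :: "nat \<times> nat"
  have gram: "gram_coords T \<gamma> rdiag r = (\<lambda>p\<in>Ridx T. a p r * r p + h p r)" for r
    by (auto simp: gram_coords_def a_def h_def algebra_simps)
  have jacobian: "gram_jacobian T \<gamma> r = (\<Prod>p\<in>Ridx T. \<bar>a p r\<bar>)" for r
    using \<open>0 < \<gamma>\<close> by (simp add: gram_jacobian_def a_def abs_mult abs_of_pos[OF rdiag_pos])
  have depends: "a p x = a p y \<and> h p x = h p y"
    if p: "p \<in> Ridx T" and agree: "\<And>q. q \<in> Ridx T \<Longrightarrow> rk q < rk p \<Longrightarrow> x q = y q" for p x y
  proof -
    obtain i k where p_eq: "p = (i, k)" and ik: "2 \<le> i" "i \<le> T" "1 \<le> k" "k < i"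
      using p by (auto simp: Ridx_def)
    have "k * T + l < i * T + k" if "l < k" for l
    proof -
      have "k * T + l < (k + 1) * T" using that ik by simp
      also have "\<dots> \<le> i * T" using ik by (intro mult_right_mono) auto
      finally show ?thesis by simp
    qed
    then have "x (k, l) = y (k, l) \<and> x (i, l) = y (i, l)" if "l \<in> {1..k-1}" for l
      using that ik by (intro conjI agree) (auto simp: Ridx_def rk_def p_eq)
    then have "rsq k x = rsq k y" "(\<Sum>l=1..k-1. x (k, l) * x (i, l)) = (\<Sum>l=1..k-1. y (k, l) * y (i, l))"
      by (auto simp: rsq_def intro!: sum.cong)
    then show ?thesis
      by (simp add: a_def h_def rdiag_def p_eq)
  qed
  show ?thesis
    unfolding gram jacobian
    by (rule nn_integral_PiM_lborel_triangular[OF finite_Ridx depends _ _ _ f])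
      (use \<open>0 < \<gamma>\<close> in \<open>auto simp: a_def h_def\<close>)
qed

lemma prod_lower_triangle_eq_prod_power:
  fixes g :: "nat \<Rightarrow> 'a::comm_monoid_mult"
  shows "(\<Prod>i=2..m. \<Prod>k=1..i-1. g k) = (\<Prod>k=1..m. g k ^ (m - k))"
proof (induction m)
  case (Suc m)
  have "(\<Prod>i=2..Suc m. \<Prod>k=1..i-1. g k) = (\<Prod>i=2..m. \<Prod>k=1..i-1. g k) * (\<Prod>k=1..m. g k)"
    by (cases m) (simp_all add: prod.cl_ivl_Suc)
  moreover have "(\<Prod>k=1..Suc m. g k ^ (Suc m - k)) = (\<Prod>k=1..m. g k ^ (Suc m - k))"
    by (simp add: prod.cl_ivl_Suc)
  moreover have "\<dots> = (\<Prod>k=1..m. g k ^ (m - k) * g k)"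
    by (intro prod.cong refl) (simp add: Suc_diff_le mult.commute)
  ultimately show ?case
    using Suc.IH by (simp add: prod.distrib)
qed simp

lemma prod_Ridx_snd: "(\<Prod>p\<in>Ridx T. g (snd p)) = (\<Prod>k=1..T. g k ^ (T - k))"
proof -
  have "Ridx T = Sigma {2..T} (\<lambda>i. {1..i-1})"
    by (auto simp: Ridx_def)
  then have "(\<Prod>p\<in>Ridx T. g (snd p)) = (\<Prod>i=2..T. \<Prod>k=1..i-1. g k)"
    by (simp only:) (subst prod.Sigma, auto simp: case_prod_beta')
  then show ?thesis
    using prod_lower_triangle_eq_prod_power[of g T] by simp
qed

lemma rdens_eq: "rdens T r = indicator (rdomain T) r * (\<Prod>p\<in>Ridx T. rdiag (snd p) r)"
proof -
  have rdens: "rdens T r = (\<Prod>i=2..T. sqrt ((1 - rsq i r) ^ (T - i)) * indicator {..1} (sqrt (rsq i r)))"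
    by (simp add: rdens_def rsq_def Let_def)
  show ?thesis
  proof (cases "r \<in> rdomain T")
    case True
    then have "sqrt ((1 - rsq i r) ^ (T - i)) * indicator {..1} (sqrt (rsq i r)) = rdiag i r ^ (T - i)"
      if "i \<in> {2..T}" for i
    proof -
      have "rsq i r \<le> 1" "i < T \<Longrightarrow> rsq i r < 1"
        using True that by (auto simp: rdomain_def le_less)
      then show ?thesis
        using that by (cases "i = T") (auto simp: rdiag_def real_sqrt_power indicator_def)
    qed
    then have "rdens T r = (\<Prod>i=2..T. rdiag i r ^ (T - i))"
      unfolding rdens by (intro prod.cong refl)
    also have "\<dots> = (\<Prod>i=1..T. rdiag i r ^ (T - i))"
      by (intro prod.mono_neutral_left) (auto simp: rdiag_def)
    finally show ?thesis
      using True prod_Ridx_snd[of "\<lambda>k. rdiag k r" T] by simp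
  next
    case False
    then consider i where "i < T" "1 \<le> rsq i r" | "1 < rsq T r"
      by (auto simp: rdomain_def not_less not_le)
    then obtain i where i: "i \<le> T" "1 \<le> rsq i r" "i = T \<longrightarrow> 1 < rsq i r"
    proof cases
      case (1 i)
      then show ?thesis using that[of i] by simp
    next
      case 2
      then show ?thesis using that[of T] by simp
    qed
    then have "2 \<le> i"
      by (cases "i \<le> 1") auto
    moreover have "sqrt ((1 - rsq i r) ^ (T - i)) * indicator {..1} (sqrt (rsq i r)) = (0::real)"
      using i by (cases "rsq i r = 1") (auto simp: indicator_def le_less)
    ultimately have "rdens T r = 0"
      unfolding rdens using i by (intro prod_zero) auto
    then show ?thesis
      using False by simp
  qed
qed

lemma borel_measurable_indicator_rdomain [measurable]:
  "(indicator (rdomain T) :: _ \<Rightarrow> ennreal) \<in> borel_measurable (lborel_Pi I)"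
proof -
  have "{r \<in> space (lborel_Pi I). r \<in> rdomain T} \<in> sets (lborel_Pi I)"
    unfolding rdomain_def by measurable
  then show ?thesis
    by (rule borel_measurable_indicator')
qed

lemma AE_indicator_rdomain_eq_psd_set:
  assumes "0 < \<gamma>"
  shows "AE r in lborel_Pi (Ridx T).
    indicator (rdomain T) r * ennreal (gram_jacobian T \<gamma> r)
      = indicator (psd_set T \<gamma>) (gram_coords T \<gamma> rdiag r) * ennreal (gram_jacobian T \<gamma> r)"
proof -
  let ?L = "lborel_Pi (Ridx T)" and ?J = "\<lambda>r. ennreal (gram_jacobian T \<gamma> r)"
  have gram_meas: "gram_coords T \<gamma> rdiag \<in> measurable ?L ?L"
    by (rule measurable_gram_coords) simp
  have integral_psd: "(\<integral>\<^sup>+r. indicator S (gram_coords T \<gamma> rdiag r) * ?J r \<partial>?L) = emeasure ?L S"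
    if "S \<in> sets ?L" for S
    using nn_integral_gram_coords[OF \<open>0 < \<gamma>\<close>, of "indicator S"] that by simp
  have le: "indicator (rdomain T) r * ?J r \<le> indicator (psd_set T \<gamma>) (gram_coords T \<gamma> rdiag r) * ?J r" for r
    using gram_coords_in_psd_set[of r T \<gamma>] \<open>0 < \<gamma>\<close> by (auto simp: indicator_def)
  \<comment> \<open>the scaled copies of the cone exhaust it, and their preimages lie in the domain\<close>
  have "ennreal (t ^ card (Ridx T)) * emeasure ?L (psd_set T \<gamma>)
      \<le> (\<integral>\<^sup>+r. indicator (rdomain T) r * ?J r \<partial>?L)" if t: "0 < t" "t < 1" for t
  proof -
    define St where "St = {y \<in> space ?L. (\<lambda>p\<in>Ridx T. y p / t) \<in> psd_set T \<gamma>}"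
    note scaled = emeasure_PiM_lborel_scaled[OF finite_Ridx \<open>0 < t\<close> psd_set_sets[of T \<gamma>], folded St_def]
    have "ennreal (t ^ card (Ridx T)) * emeasure ?L (psd_set T \<gamma>)
        = (\<integral>\<^sup>+r. indicator St (gram_coords T \<gamma> rdiag r) * ?J r \<partial>?L)"
      using scaled by (simp add: integral_psd[OF scaled(1)])
    also have "\<dots> \<le> (\<integral>\<^sup>+r. indicator (rdomain T) r * ?J r \<partial>?L)"
      using rdomain_if_scaled_gram_coords_in_psd_set[OF \<open>0 < \<gamma>\<close> t]
      by (intro nn_integral_mono) (auto simp: St_def indicator_def)
    finally show ?thesis .
  qed
  then have "(\<integral>\<^sup>+r. indicator (psd_set T \<gamma>) (gram_coords T \<gamma> rdiag r) * ?J r \<partial>?L)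
      \<le> (\<integral>\<^sup>+r. indicator (rdomain T) r * ?J r \<partial>?L)"
    unfolding integral_psd[OF psd_set_sets] by (rule ennreal_le_if_power_scaled_le)
  then show ?thesis
    using le emeasure_psd_set_finite[of T \<gamma>] gram_meas psd_set_sets[of T \<gamma>]
    by (intro AE_eq_if_le_and_nn_integral_ge) (auto simp: integral_psd)
qed

section \<open>The distribution of \<open>\<rho>(X)\<close>\<close>

lemma Xtilde_inner_eq:
  assumes X: "X \<in> Xtilde snr nt T" and "T \<le> nt" and jk: "1 \<le> j" "j \<le> k" "k \<le> T"
  shows "(\<Sum>l=1..nt. X l j * X l k) = (\<Sum>l=1..j-1. X l j * X l k) + X j j * X j k"
  using X jk \<open>T \<le> nt\<close>
  by (intro sum_atLeastAtMost_eq_prefix_plus_last) (auto simp: Xtilde_def)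

lemma Xtilde_col_sqnorm:
  assumes "X \<in> Xtilde snr nt T" "j \<in> {1..T}"
  shows "col_sqnorm nt X j = snr"
  using assms by (auto simp: Xtilde_def col_sqnorm_def)

lemma rvec_apply: "(i, k) \<in> Ridx T \<Longrightarrow> rvec snr T X (i, k) = X k i / sqrt snr"
  by (simp add: rvec_def)

lemma Xtilde_diag_eq:
  assumes "0 < snr" and X: "X \<in> Xtilde snr nt T" and "T \<le> nt" and j: "1 \<le> j" "j \<le> T"
  shows "sqrt (1 - rsq j (rvec snr T X)) = X j j / sqrt snr"
proof -
  have "rsq j (rvec snr T X) = (\<Sum>l=1..j-1. (X l j)\<^sup>2) / snr"
    unfolding rsq_def sum_divide_distrib using \<open>0 < snr\<close> j
    by (intro sum.cong refl) (auto simp: rvec_def Ridx_def power_divide)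
  moreover have "snr = (\<Sum>l=1..j-1. (X l j)\<^sup>2) + (X j j)\<^sup>2"
    using Xtilde_inner_eq[OF X \<open>T \<le> nt\<close> j(1) order.refl j(2)] Xtilde_col_sqnorm[OF X] j
    by (simp add: col_sqnorm_def power2_eq_square)
  ultimately have "1 - rsq j (rvec snr T X) = (X j j / sqrt snr)\<^sup>2"
    using \<open>0 < snr\<close> by (simp add: field_simps power_divide)
  moreover have "0 \<le> X j j"
    using X j by (simp add: Xtilde_def)
  ultimately show ?thesis
    using \<open>0 < snr\<close> by simp
qed

lemma rho_eq_transpose_gram_coords:
  assumes "0 < snr" and \<gamma>: "\<gamma> = snr / (1 + snr)" and "T \<le> nt" and X: "X \<in> Xtilde snr nt T"
  shows "rho nt T X = transpose_coords T (gram_coords T \<gamma> (\<lambda>k r. sqrt (1 - rsq k r)) (rvec snr T X))"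
  unfolding rho_def transpose_coords_def
proof (intro restrict_ext)
  fix p assume "p \<in> Pidx T"
  then obtain j k where p_eq: "p = (j, k)" and jk: "1 \<le> j" "j < k" "k \<le> T"
    by (auto simp: Pidx_def)
  define \<sigma> where "\<sigma> = sqrt snr"
  have \<sigma>: "0 < \<sigma>" "snr = \<sigma>\<^sup>2"
    using \<open>0 < snr\<close> by (simp_all add: \<sigma>_def)
  define r where "r = rvec snr T X"
  define S where "S = (\<Sum>l=1..j-1. X l j * X l k)"
  have sum_r: "(\<Sum>l=1..j-1. r (j, l) * r (k, l)) = S / \<sigma>\<^sup>2"
    unfolding S_def sum_divide_distrib using jk
    by (intro sum.cong refl) (auto simp: r_def rvec_def Ridx_def \<sigma>_def power2_eq_square)
  have r_kj: "r (k, j) = X j k / \<sigma>"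
    using jk by (simp add: r_def rvec_apply Ridx_def \<sigma>_def)
  have diag: "sqrt (1 - rsq j r) = X j j / \<sigma>"
    unfolding r_def \<sigma>_def using Xtilde_diag_eq[OF \<open>0 < snr\<close> X \<open>T \<le> nt\<close>] jk by simp
  have "gram_coords T \<gamma> (\<lambda>k r. sqrt (1 - rsq k r)) r (k, j)
      = \<gamma> * (sqrt (1 - rsq j r) * r (k, j) + (\<Sum>l=1..j-1. r (j, l) * r (k, l)))"
    using jk by (simp add: gram_coords_def Ridx_def)
  also have "\<dots> = \<gamma> * (X j j / \<sigma> * (X j k / \<sigma>) + S / \<sigma>\<^sup>2)"
    by (simp only: diag r_kj sum_r)
  also have "\<dots> = snr / (1 + snr) * ((S + X j j * X j k) / snr)"
    using \<sigma> unfolding \<gamma> by (simp add: field_simps power2_eq_square)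
  also have "\<dots> = (S + X j j * X j k) / (1 + snr)"
    using \<open>0 < snr\<close> by simp
  also have "\<dots> = rho_entry nt X j k"
    using Xtilde_inner_eq[OF X \<open>T \<le> nt\<close>, of j k] Xtilde_col_sqnorm[OF X, of j]
      Xtilde_col_sqnorm[OF X, of k] jk \<open>0 < snr\<close>
    by (simp add: rho_entry_def S_def power2_eq_square[symmetric])
  finally show "(case p of (j, k) \<Rightarrow> rho_entry nt X j k)
      = gram_coords T \<gamma> (\<lambda>k r. sqrt (1 - rsq k r)) (rvec snr T X) (snd p, fst p)"
    by (simp add: p_eq r_def)
qed

lemma gram_coords_sqrt_eq_rdiag:
  assumes "r \<in> rdomain T"
  shows "gram_coords T \<gamma> (\<lambda>k r. sqrt (1 - rsq k r)) r = gram_coords T \<gamma> rdiag r"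
  using assms by (auto simp: gram_coords_def rdomain_def rdiag_def Ridx_def intro!: restrict_ext)

lemma borel_measurable_rdens [measurable]: "rdens T \<in> borel_measurable (lborel_Pi I)"
  unfolding rdens_def Let_def by measurable

lemma ennreal_density_rdens:
  assumes "0 < \<gamma>"
  shows "ennreal (c * rdens T r)
    = ennreal (c / \<gamma> ^ card (Ridx T)) * (indicator (rdomain T) r * ennreal (gram_jacobian T \<gamma> r))"
proof -
  have "gram_jacobian T \<gamma> r = \<gamma> ^ card (Ridx T) * (\<Prod>p\<in>Ridx T. rdiag (snd p) r)"
    by (simp add: gram_jacobian_def prod.distrib)
  then have eq: "c * rdens T r = c / \<gamma> ^ card (Ridx T) * (indicator (rdomain T) r * gram_jacobian T \<gamma> r)"
    using \<open>0 < \<gamma>\<close> by (simp add: rdens_eq)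
  have "0 \<le> indicator (rdomain T) r * gram_jacobian T \<gamma> r"
    using \<open>0 < \<gamma>\<close> rdiag_pos by (simp add: gram_jacobian_def prod_nonneg less_imp_le)
  then have "ennreal (c * rdens T r)
      = ennreal (c / \<gamma> ^ card (Ridx T)) * ennreal (indicator (rdomain T) r * gram_jacobian T \<gamma> r)"
    unfolding eq by (rule ennreal_mult'')
  then show ?thesis
    by (simp add: indicator_def)
qed

lemma nn_integral_transpose_coords:
  assumes "g \<in> borel_measurable (lborel_Pi (Pidx T))"
  shows "(\<integral>\<^sup>+y. g (transpose_coords T y) \<partial>lborel_Pi (Ridx T)) = integral\<^sup>N (lborel_Pi (Pidx T)) g"
proof -
  have "integral\<^sup>N (lborel_Pi (Pidx T)) g
      = integral\<^sup>N (distr (lborel_Pi (Ridx T)) (lborel_Pi (Pidx T)) (transpose_coords T)) g"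
    by (simp add: distr_transpose_coords)
  also have "\<dots> = (\<integral>\<^sup>+y. g (transpose_coords T y) \<partial>lborel_Pi (Ridx T))"
    using assms by (intro nn_integral_distr measurable_transpose_coords) simp
  finally show ?thesis ..
qed

lemma measurable_transpose_gram_coords:
  "(\<lambda>r. transpose_coords T (gram_coords T \<gamma> (\<lambda>k r. sqrt (1 - rsq k r)) r))
    \<in> measurable (lborel_Pi (Ridx T)) (lborel_Pi (Pidx T))"
  by (intro measurable_comp[OF measurable_gram_coords measurable_transpose_coords, unfolded comp_def])
    simp

lemma emeasure_distr_density_rdens:
  assumes "0 < \<gamma>" and A: "A \<in> sets (lborel_Pi (Pidx T))"
  defines "G \<equiv> \<lambda>r. transpose_coords T (gram_coords T \<gamma> (\<lambda>k r. sqrt (1 - rsq k r)) r)"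
  shows "emeasure (distr (density (lborel_Pi (Ridx T)) (\<lambda>r. ennreal (c * rdens T r))) (lborel_Pi (Pidx T)) G) A
    = ennreal (c / \<gamma> ^ card (Ridx T)) * emeasure (lborel_Pi (Pidx T)) (Qset T \<gamma> \<inter> A)"
proof -
  let ?L = "lborel_Pi (Ridx T)" and ?J = "\<lambda>r. ennreal (gram_jacobian T \<gamma> r)"
    and ?c = "ennreal (c / \<gamma> ^ card (Ridx T))" and ?\<Phi> = "gram_coords T \<gamma> rdiag"
  have G_meas: "G \<in> measurable ?L (lborel_Pi (Pidx T))"
    unfolding G_def by (rule measurable_transpose_gram_coords)
  have \<Phi>_meas: "?\<Phi> \<in> measurable ?L ?L"
    by (rule measurable_gram_coords) simp
  have KA_meas: "(\<lambda>y. indicator (psd_set T \<gamma>) y * indicator A (transpose_coords T y) :: ennreal)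
      \<in> borel_measurable ?L"
    using psd_set_sets[of T \<gamma>] A measurable_transpose_coords by measurable
  have "emeasure (distr (density ?L (\<lambda>r. ennreal (c * rdens T r))) (lborel_Pi (Pidx T)) G) A
      = (\<integral>\<^sup>+r. ennreal (c * rdens T r) * indicator (G -` A \<inter> space ?L) r \<partial>?L)"
    using G_meas A by (simp add: emeasure_distr emeasure_density measurable_sets)
  also have "\<dots> = (\<integral>\<^sup>+r. ?c * ((indicator (rdomain T) r * ?J r) * indicator A (transpose_coords T (?\<Phi> r))) \<partial>?L)"
    using \<open>0 < \<gamma>\<close>
    by (intro nn_integral_cong) (auto simp: ennreal_density_rdens G_def gram_coords_sqrt_eq_rdiag indicator_def)
  also have "\<dots> = (\<integral>\<^sup>+r. ?c * ((indicator (psd_set T \<gamma>) (?\<Phi> r) * ?J r) * indicator A (transpose_coords T (?\<Phi> r))) \<partial>?L)"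
    by (rule nn_integral_cong_AE) (use AE_indicator_rdomain_eq_psd_set[OF \<open>0 < \<gamma>\<close>, of T] in
        \<open>eventually_elim, simp\<close>)
  also have "\<dots> = (\<integral>\<^sup>+r. ?c * ((indicator (psd_set T \<gamma>) (?\<Phi> r) * indicator A (transpose_coords T (?\<Phi> r))) * ?J r) \<partial>?L)"
    by (intro nn_integral_cong) (simp add: ac_simps)
  also have "\<dots> = ?c * (\<integral>\<^sup>+r. (indicator (psd_set T \<gamma>) (?\<Phi> r) * indicator A (transpose_coords T (?\<Phi> r))) * ?J r \<partial>?L)"
  proof (rule nn_integral_cmult)
    have [measurable]: "(\<lambda>r. indicator (psd_set T \<gamma>) (?\<Phi> r) * indicator A (transpose_coords T (?\<Phi> r)) :: ennreal)
        \<in> borel_measurable ?L"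
      using measurable_comp[OF \<Phi>_meas KA_meas] by (simp add: comp_def)
    show "(\<lambda>r. (indicator (psd_set T \<gamma>) (?\<Phi> r) * indicator A (transpose_coords T (?\<Phi> r))) * ?J r)
        \<in> borel_measurable ?L"
      by measurable
  qed
  also have "\<dots> = ?c * (\<integral>\<^sup>+y. indicator (psd_set T \<gamma>) y * indicator A (transpose_coords T y) \<partial>?L)"
    by (simp only: nn_integral_gram_coords[OF \<open>0 < \<gamma>\<close> KA_meas])
  also have "\<dots> = ?c * (\<integral>\<^sup>+y. indicator (Qset T \<gamma> \<inter> A) (transpose_coords T y) \<partial>?L)"
    by (intro arg_cong[where f = "(*) ?c"] nn_integral_cong) (simp add: psd_set_eq_vimage indicator_def)
  also have "\<dots> = ?c * emeasure (lborel_Pi (Pidx T)) (Qset T \<gamma> \<inter> A)"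
    using A Qset_sets by (simp add: nn_integral_transpose_coords)
  finally show ?thesis .
qed

theorem lemma7:
  fixes T nt :: nat and snr \<gamma> :: real
    and M :: "'a measure" and X :: "'a \<Rightarrow> nat \<Rightarrow> nat \<Rightarrow> real"
  assumes "T \<ge> 2" and "nt \<ge> T" and "snr > 0" and "\<gamma> = snr / (1 + snr)"
    and "prob_space M"
    and "\<forall>\<omega>\<in>space M. X \<omega> \<in> Xtilde snr nt T"
    and "(\<lambda>\<omega>. rvec snr T (X \<omega>)) \<in> measurable M (PiM (Ridx T) (\<lambda>_. lborel))"
    and "\<exists>c::real. distr M (PiM (Ridx T) (\<lambda>_. lborel)) (\<lambda>\<omega>. rvec snr T (X \<omega>))
           = density (PiM (Ridx T) (\<lambda>_. lborel)) (\<lambda>r. ennreal (c * rdens T r))"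
  shows "distr M (PiM (Pidx T) (\<lambda>_. lborel)) (\<lambda>\<omega>. rho nt T (X \<omega>))
           = uniform_measure (PiM (Pidx T) (\<lambda>_. lborel)) (Qset T \<gamma>)"
proof -
  obtain c :: real where density: "distr M (lborel_Pi (Ridx T)) (\<lambda>\<omega>. rvec snr T (X \<omega>))
      = density (lborel_Pi (Ridx T)) (\<lambda>r. ennreal (c * rdens T r))"
    using assms(8) by blast
  have "0 < \<gamma>"
    using assms(3,4) by simp
  define G where "G r = transpose_coords T (gram_coords T \<gamma> (\<lambda>k r. sqrt (1 - rsq k r)) r)" for r
  have G_meas: "G \<in> measurable (lborel_Pi (Ridx T)) (lborel_Pi (Pidx T))"
    unfolding G_def by (rule measurable_transpose_gram_coords)
  have pushforward: "distr M (lborel_Pi (Pidx T)) (\<lambda>\<omega>. G (rvec snr T (X \<omega>)))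
      = distr (density (lborel_Pi (Ridx T)) (\<lambda>r. ennreal (c * rdens T r))) (lborel_Pi (Pidx T)) G"
    using distr_distr[OF G_meas assms(7)] density by (simp add: comp_def)
  have "distr M (lborel_Pi (Pidx T)) (\<lambda>\<omega>. rho nt T (X \<omega>))
      = distr M (lborel_Pi (Pidx T)) (\<lambda>\<omega>. G (rvec snr T (X \<omega>)))"
    using rho_eq_transpose_gram_coords[OF assms(3,4,2)] assms(6)
    by (intro distr_cong) (simp_all add: G_def)
  also have "\<dots> = uniform_measure (lborel_Pi (Pidx T)) (Qset T \<gamma>)"
  proof (rule prob_space_eq_uniform_measureI[OF _ _ Qset_sets])
    show "prob_space (distr M (lborel_Pi (Pidx T)) (\<lambda>\<omega>. G (rvec snr T (X \<omega>))))"
      using prob_space.prob_space_distr[OF assms(5) measurable_comp[OF assms(7) G_meas]]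
      by (simp add: comp_def)
    fix A assume "A \<in> sets (lborel_Pi (Pidx T))"
    then show "emeasure (distr M (lborel_Pi (Pidx T)) (\<lambda>\<omega>. G (rvec snr T (X \<omega>)))) A
        = ennreal (c / \<gamma> ^ card (Ridx T)) * emeasure (lborel_Pi (Pidx T)) (Qset T \<gamma> \<inter> A)"
      unfolding pushforward unfolding G_def by (rule emeasure_distr_density_rdens[OF \<open>0 < \<gamma>\<close>])
  qed simp
  finally show ?thesis .
qed

end
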